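(* Let $f:[0,\infty)\to\mathbb{R}$ be convex with $f(1)=0$ and $G$ an increasing convex function with $G(0)=0$ such that $(G,f)$ is information-subadditive. Consider a message set $\mathcal{M}=\{1,\dots,|\mathcal{M}|\}$ with $|\mathcal{M}|\ge2$ and message $M$ uniform on $\mathcal{M}$, an encoder mapping each $m$ to a codeword $X^n(m)\in\mathcal{X}^n$, a memoryless channel $p_{Y^n|X^n}(y^n|x^n)=\prod_{i=1}^n W_{Y|X}(y_i|x_i)$ on finite alphabets, and a decoder mapping $Y^n$ to an estimate $\hat M\in\mathcal{M}$, with average error probability $\Pr(M\ne\hat M)=\epsilon$. Then $$n\ge \frac{G\!\left(\frac{1}{|\mathcal{M}|}f(|\mathcal{M}|(1-\epsilon))+\frac{|\mathcal{M}|-1}{|\mathcal{M}|}f\!\left(\frac{|\mathcal{M}|\epsilon}{|\mathcal{M}|-1}\right)\right)}{\max_{p_X} I_{G,f}(X;Y)},$$ where in the denominator $Y$ is the output of $W_{Y|X}$ with input $X\sim p_X$.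
   Context: For distributions $p\ll q$ on a finite set, $D_f(p\|q)=\sum_x q(x) f(p(x)/q(x))$ with $0f(0/0)=0$. For random variables $X,Y$ on finite sets, $I_{G,f}(X;Y)=\min_{q_Y}\sum_x p_X(x)\,G(D_f(p_{Y|X=x}\|q_Y))$. $(G,f)$ is information-subadditive if for all random variables $X,Y,Z$ on finite sets with $p_{XYZ}=p_Xp_{Y|X}p_{Z|X}$, $I_{G,f}(X;YZ)\le I_{G,f}(X;Y)+I_{G,f}(X;Z)$. *)

theory Defs
  imports "HOL-Analysis.Analysis"
begin

definition is_dist :: "'a set \<Rightarrow> ('a \<Rightarrow> real) \<Rightarrow> bool" where
  "is_dist A p \<longleftrightarrow> (\<forall>x\<in>A. 0 \<le> p x) \<and> sum p A = 1"

definition abs_cont :: "'a set \<Rightarrow> ('a \<Rightarrow> real) \<Rightarrow> ('a \<Rightarrow> real) \<Rightarrow> bool" where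
  "abs_cont A p q \<longleftrightarrow> (\<forall>x\<in>A. q x = 0 \<longrightarrow> p x = 0)"

text \<open>f-divergence; terms with q x = 0 (hence p x = 0) contribute 0 * f 0 = 0.\<close>
definition fdiv :: "(real \<Rightarrow> real) \<Rightarrow> 'a set \<Rightarrow> ('a \<Rightarrow> real) \<Rightarrow> ('a \<Rightarrow> real) \<Rightarrow> real" where
  "fdiv f A p q = (\<Sum>x\<in>A. q x * f (p x / q x))"

text \<open>I_{G,f}(X;Y) for X ~ pX on A and conditional law W x of Y given X = x on B.
  The minimum over q_Y ranges over distributions with p_{Y|X=x} << q_Y for all x in the
  support of pX (where D_f is defined); it is written as an infimum.\<close>
definition igf :: "(real \<Rightarrow> real) \<Rightarrow> (real \<Rightarrow> real) \<Rightarrow> 'a set \<Rightarrow> ('a \<Rightarrow> real)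
    \<Rightarrow> 'b set \<Rightarrow> ('a \<Rightarrow> 'b \<Rightarrow> real) \<Rightarrow> real" where
  "igf G f A pX B W =
     (INF q\<in>{q. is_dist B q \<and> (\<forall>x\<in>A. pX x > 0 \<longrightarrow> abs_cont B (W x) q)}.
        \<Sum>x\<in>A. pX x * G (fdiv f B (W x) q))"

text \<open>Information-subadditivity; finite alphabets are modelled as finite sets of naturals
  (every finite set is in bijection with one, and I_{G,f} is invariant under relabelling).\<close>
definition info_subadditive :: "(real \<Rightarrow> real) \<Rightarrow> (real \<Rightarrow> real) \<Rightarrow> bool" where
  "info_subadditive G f \<longleftrightarrow>
    (\<forall>(A::nat set) (B::nat set) (C::nat set) pX WY WZ.
       finite A \<and> finite B \<and> finite C \<and> is_dist A pX \<and>
       (\<forall>x\<in>A. is_dist B (WY x)) \<and> (\<forall>x\<in>A. is_dist C (WZ x)) \<longrightarrow>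
       igf G f A pX (B \<times> C) (\<lambda>x (y, z). WY x y * WZ x z)
         \<le> igf G f A pX B WY + igf G f A pX C WZ)"

end

theory Submission
  imports Defs
begin

text \<open>Fix an output law q admissible for the n-letter channel. Averaged over the uniform
  message M, the divergences D_f(p_{Y^n|M=m} || q) add up to the f-divergence between the joint law
  of (M, Y^n) and the product of the uniform law with q. Pushing both forward to the indicator of
  correct decoding can only decrease it (data processing), and yields the binary divergence in the
  numerator; convexity and monotonicity of G then bound G of it by I_{G,f}(M; Y^n).
  Conversely, the letters of Y^n are conditionally independent given M, so subadditivity peels off
  one letter at a time: I_{G,f}(M; Y^n) is at most the sum of the I_{G,f}(M; Y_i), and each of these
  equals I_{G,f}(X_i; Y_i) for the law of the i-th codeword letter X_i, hence is at most the
  maximum in the denominator.\<close>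

lemma perspective_jensen:
  fixes f :: "real \<Rightarrow> real"
  assumes f: "convex_on {0..} f" and S: "finite S"
    and w: "\<And>s. s \<in> S \<Longrightarrow> 0 \<le> w s" and v: "\<And>s. s \<in> S \<Longrightarrow> 0 \<le> v s"
    and wv: "\<And>s. s \<in> S \<Longrightarrow> w s = 0 \<Longrightarrow> v s = 0"
  shows "sum w S * f (sum v S / sum w S) \<le> (\<Sum>s\<in>S. w s * f (v s / w s))"
proof (cases "sum w S = 0")
  case True
  then have "\<forall>s\<in>S. w s = 0" using sum_nonneg_eq_0_iff[OF S] w by blast
  then show ?thesis using True by simp
next
  case False
  define c where "c = sum w S"
  have "0 < c" using False sum_nonneg[of S w] w unfolding c_def by force
  have "f (\<Sum>s\<in>S. (w s / c) *\<^sub>R (v s / w s)) \<le> (\<Sum>s\<in>S. (w s / c) * f (v s / w s))"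
    by (rule convex_on_sum[OF S _ f])
      (use w v \<open>0 < c\<close> False in \<open>auto simp: c_def sum_divide_distrib[symmetric]\<close>)
  moreover have "(\<Sum>s\<in>S. (w s / c) *\<^sub>R (v s / w s)) = sum v S / c"
    unfolding sum_divide_distrib by (rule sum.cong) (use wv in auto)
  ultimately have "f (sum v S / c) \<le> (\<Sum>s\<in>S. w s * f (v s / w s)) / c"
    by (simp add: sum_divide_distrib)
  then show ?thesis using \<open>0 < c\<close> unfolding c_def[symmetric] by (simp add: field_simps)
qed

lemma fdiv_nonneg:
  fixes f :: "real \<Rightarrow> real"
  assumes "convex_on {0..} f" "f 1 = 0" "finite B"
    and p: "is_dist B p" and q: "is_dist B q" and "abs_cont B p q"
  shows "0 \<le> fdiv f B p q"
proof -
  have "sum q B * f (sum p B / sum q B) \<le> fdiv f B p q"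
    unfolding fdiv_def
    by (rule perspective_jensen) (use assms in \<open>auto simp: is_dist_def abs_cont_def\<close>)
  then show ?thesis using assms by (simp add: is_dist_def)
qed

definition push_forward :: "'a set \<Rightarrow> ('a \<Rightarrow> 'b) \<Rightarrow> ('a \<Rightarrow> real) \<Rightarrow> 'b \<Rightarrow> real" where
  "push_forward A g p b = (\<Sum>a\<in>{a\<in>A. g a = b}. p a)"

lemma is_dist_push_forward:
  assumes "finite A" "finite B" "g ` A \<subseteq> B" "is_dist A p"
  shows "is_dist B (push_forward A g p)"
  using assms sum.group[OF assms(1-3), of p]
  by (auto simp: is_dist_def push_forward_def intro!: sum_nonneg)

lemma push_forward_pos_iff:
  assumes "finite A" "\<forall>a\<in>A. 0 \<le> p a"
  shows "0 < push_forward A g p b \<longleftrightarrow> (\<exists>a\<in>A. g a = b \<and> 0 < p a)"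
proof -
  have "0 \<le> push_forward A g p b"
    unfolding push_forward_def by (rule sum_nonneg) (use assms in auto)
  moreover have "push_forward A g p b = 0 \<longleftrightarrow> (\<forall>a\<in>A. g a = b \<longrightarrow> p a = 0)"
    unfolding push_forward_def using assms by (subst sum_nonneg_eq_0_iff) auto
  ultimately show ?thesis using assms by force
qed

lemma abs_cont_push_forward:
  assumes "finite A" "\<forall>a\<in>A. 0 \<le> q a" "abs_cont A p q"
  shows "abs_cont B (push_forward A g p) (push_forward A g q)"
  unfolding abs_cont_def push_forward_def
proof (intro ballI impI)
  fix b assume "sum q {a \<in> A. g a = b} = 0"
  then have "\<forall>a\<in>{a \<in> A. g a = b}. q a = 0"
    using assms(1,2) by (subst (asm) sum_nonneg_eq_0_iff) auto
  then show "sum p {a \<in> A. g a = b} = 0"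
    using assms(3) by (simp add: abs_cont_def)
qed

lemma fdiv_push_forward_le:
  fixes f :: "real \<Rightarrow> real"
  assumes "convex_on {0..} f" "finite A" "finite B" "g ` A \<subseteq> B"
    and "\<forall>a\<in>A. 0 \<le> p a" "\<forall>a\<in>A. 0 \<le> q a" "abs_cont A p q"
  shows "fdiv f B (push_forward A g p) (push_forward A g q) \<le> fdiv f A p q"
proof -
  have "fdiv f B (push_forward A g p) (push_forward A g q)
      \<le> (\<Sum>b\<in>B. \<Sum>a\<in>{a\<in>A. g a = b}. q a * f (p a / q a))"
    unfolding fdiv_def push_forward_def
    by (intro sum_mono perspective_jensen) (use assms in \<open>auto simp: abs_cont_def\<close>)
  also have "\<dots> = fdiv f A p q"
    unfolding fdiv_def by (rule sum.group) (use assms in auto)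
  finally show ?thesis .
qed

definition igf_admissible :: "'a set \<Rightarrow> ('a \<Rightarrow> real) \<Rightarrow> 'b set \<Rightarrow> ('a \<Rightarrow> 'b \<Rightarrow> real)
    \<Rightarrow> ('b \<Rightarrow> real) set" where
  "igf_admissible A pX B W = {q. is_dist B q \<and> (\<forall>x\<in>A. pX x > 0 \<longrightarrow> abs_cont B (W x) q)}"

definition igf_objective :: "(real \<Rightarrow> real) \<Rightarrow> (real \<Rightarrow> real) \<Rightarrow> 'a set \<Rightarrow> ('a \<Rightarrow> real)
    \<Rightarrow> 'b set \<Rightarrow> ('a \<Rightarrow> 'b \<Rightarrow> real) \<Rightarrow> ('b \<Rightarrow> real) \<Rightarrow> real" where
  "igf_objective G f A pX B W q = (\<Sum>x\<in>A. pX x * G (fdiv f B (W x) q))"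

lemma igf_eq_Inf: "igf G f A pX B W = Inf (igf_objective G f A pX B W ` igf_admissible A pX B W)"
  unfolding igf_def igf_admissible_def igf_objective_def by simp

lemma uniform_igf_admissible:
  assumes "finite B" "B \<noteq> {}"
  shows "(\<lambda>_. 1 / real (card B)) \<in> igf_admissible A pX B W"
  using assms by (auto simp: igf_admissible_def is_dist_def abs_cont_def card_gt_0_iff)

lemma igf_greatest:
  assumes "igf_admissible A pX B W \<noteq> {}"
    and "\<And>q. q \<in> igf_admissible A pX B W \<Longrightarrow> c \<le> igf_objective G f A pX B W q"
  shows "c \<le> igf G f A pX B W"
  unfolding igf_eq_Inf by (rule cINF_greatest) (use assms in auto)

lemma igf_cong:
  assumes "\<And>x b. x \<in> A \<Longrightarrow> b \<in> B \<Longrightarrow> W x b = W' x b"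
  shows "igf G f A pX B W = igf G f A pX B W'"
proof -
  have "igf_admissible A pX B W = igf_admissible A pX B W'"
    using assms unfolding igf_admissible_def abs_cont_def by auto
  moreover have "igf_objective G f A pX B W q = igf_objective G f A pX B W' q" for q
    using assms unfolding igf_objective_def fdiv_def by (intro sum.cong refl) auto
  ultimately show ?thesis unfolding igf_eq_Inf by simp
qed

lemma igf_relabel:
  assumes h: "bij_betw h B B'"
  shows "igf G f A pX B' W' = igf G f A pX B (\<lambda>x b. W' x (h b))"
proof -
  let ?W = "\<lambda>x b. W' x (h b)"
  let ?obj = "igf_objective G f A pX B ?W" and ?adm = "igf_admissible A pX B ?W"
  have sum_B': "sum g B' = sum (g \<circ> h) B" for g :: "_ \<Rightarrow> real"
    using sum.reindex_bij_betw[OF h, symmetric] by (simp add: o_def)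
  have adm: "q \<in> igf_admissible A pX B' W' \<longleftrightarrow> q \<circ> h \<in> ?adm" for q
    unfolding igf_admissible_def is_dist_def abs_cont_def mem_Collect_eq sum_B'
    using h by (auto simp: bij_betw_def o_def)
  have obj: "igf_objective G f A pX B' W' q = ?obj (q \<circ> h)" for q
    unfolding igf_objective_def fdiv_def by (simp add: sum_B' o_def)
  have only_B: "q' \<in> ?adm \<and> ?obj q' = ?obj q"
    if "q \<in> ?adm" "\<And>b. b \<in> B \<Longrightarrow> q' b = q b" for q q'
    using that unfolding igf_admissible_def igf_objective_def is_dist_def abs_cont_def fdiv_def
    by (auto intro!: sum.cong simp: sum.cong[of B B q' q])
  have "igf_objective G f A pX B' W' ` igf_admissible A pX B' W' = ?obj ` ?adm"
  proof (intro equalityI subsetI)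
    fix t assume "t \<in> igf_objective G f A pX B' W' ` igf_admissible A pX B' W'"
    then show "t \<in> ?obj ` ?adm" using adm obj by auto
  next
    fix t assume "t \<in> ?obj ` ?adm"
    then obtain q where q: "q \<in> ?adm" "t = ?obj q" by auto
    define q' where "q' = q \<circ> inv_into B h"
    have "(q' \<circ> h) b = q b" if "b \<in> B" for b
      using h that by (simp add: q'_def bij_betw_def)
    then have "q' \<circ> h \<in> ?adm \<and> ?obj (q' \<circ> h) = ?obj q" by (rule only_B[OF q(1)])
    then have "q' \<in> igf_admissible A pX B' W'" "t = igf_objective G f A pX B' W' q'"
      using adm obj q(2) by simp_all
    then show "t \<in> igf_objective G f A pX B' W' ` igf_admissible A pX B' W'" by blast
  qed
  then show ?thesis unfolding igf_eq_Inf by simp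
qed

lemma is_dist_relabel:
  assumes "bij_betw h B' B" "is_dist B p"
  shows "is_dist B' (\<lambda>b. p (h b))"
  using assms sum.reindex_bij_betw[OF assms(1), of p] by (auto simp: is_dist_def bij_betw_def)

lemma info_subadditive_finite:
  fixes A :: "nat set" and B :: "'b set" and C :: "'c set"
  assumes "info_subadditive G f" "finite A" "finite B" "finite C" "is_dist A pX"
    and "\<And>x. x \<in> A \<Longrightarrow> is_dist B (WY x)" "\<And>x. x \<in> A \<Longrightarrow> is_dist C (WZ x)"
  shows "igf G f A pX (B \<times> C) (\<lambda>x (y, z). WY x y * WZ x z)
    \<le> igf G f A pX B WY + igf G f A pX C WZ"
proof -
  obtain hB where hB: "bij_betw hB {0..<card B} B" using ex_bij_betw_nat_finite[OF assms(3)] by blast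
  obtain hC where hC: "bij_betw hC {0..<card C} C" using ex_bij_betw_nat_finite[OF assms(4)] by blast
  have "igf G f A pX ({0..<card B} \<times> {0..<card C}) (\<lambda>x (y, z). WY x (hB y) * WZ x (hC z))
    \<le> igf G f A pX {0..<card B} (\<lambda>x y. WY x (hB y)) + igf G f A pX {0..<card C} (\<lambda>x z. WZ x (hC z))"
    using assms(1) unfolding info_subadditive_def
    by (elim allE impE) (use assms is_dist_relabel[OF hB] is_dist_relabel[OF hC] in auto)
  then show ?thesis
    unfolding igf_relabel[OF hB] igf_relabel[OF hC] igf_relabel[OF bij_betw_map_prod[OF hB hC]]
    by (simp add: case_prod_unfold map_prod_def)
qed

lemma igf_push_forward:
  fixes g :: "'a \<Rightarrow> 'x::finite"
  assumes "finite A" "\<forall>a\<in>A. 0 \<le> pA a"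
  shows "igf G f A pA B (\<lambda>a. W (g a)) = igf G f UNIV (push_forward A g pA) B W"
proof -
  have "igf_admissible A pA B (\<lambda>a. W (g a)) = igf_admissible UNIV (push_forward A g pA) B W"
    unfolding igf_admissible_def push_forward_pos_iff[OF assms] by auto
  moreover have "igf_objective G f A pA B (\<lambda>a. W (g a)) q
      = igf_objective G f UNIV (push_forward A g pA) B W q" for q
  proof -
    have "igf_objective G f UNIV (push_forward A g pA) B W q
        = (\<Sum>x\<in>UNIV. \<Sum>a\<in>{a\<in>A. g a = x}. pA a * G (fdiv f B (W (g a)) q))"
      unfolding igf_objective_def push_forward_def sum_distrib_right by simp
    also have "\<dots> = igf_objective G f A pA B (\<lambda>a. W (g a)) q"
      unfolding igf_objective_def by (rule sum.group) (use assms in auto)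
    finally show ?thesis by simp
  qed
  ultimately show ?thesis unfolding igf_eq_Inf by simp
qed

lemma is_dist_product_channel:
  fixes V :: "nat \<Rightarrow> 'y::finite \<Rightarrow> real"
  assumes "\<And>i. is_dist UNIV (V i)"
  shows "is_dist ({..<k} \<rightarrow>\<^sub>E UNIV) (\<lambda>y. \<Prod>i<k. V i (y i))"
proof -
  have "(\<Sum>y\<in>{..<k} \<rightarrow>\<^sub>E UNIV. \<Prod>i<k. V i (y i)) = (\<Prod>i<k. \<Sum>b\<in>UNIV. V i b)"
    by (rule prod_sum_PiE[symmetric]) auto
  then show ?thesis using assms by (auto simp: is_dist_def intro!: prod_nonneg)
qed

lemma bij_betw_PiE_lessThan_Suc:
  "bij_betw (\<lambda>(b, y). y(k := b)) (B \<times> ({..<k} \<rightarrow>\<^sub>E B)) ({..<Suc k} \<rightarrow>\<^sub>E B)"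
  unfolding bij_betw_def lessThan_Suc PiE_insert_eq using inj_combinator[of k "{..<k}"] by auto

lemma fdiv_joint_eq_average:
  "fdiv f (A \<times> Y) (\<lambda>(a, y). w a * P a y) (\<lambda>(a, y). w a * q y)
    = (\<Sum>a\<in>A. w a * fdiv f Y (P a) q)"
proof -
  have "w a * q y * f (w a * P a y / (w a * q y)) = w a * (q y * f (P a y / q y))" for a y
    by (cases "w a = 0") simp_all
  then show ?thesis
    unfolding fdiv_def sum_distrib_left sum.cartesian_product by (intro sum.cong) auto
qed

text \<open>The f-divergence between Bernoulli(1 - \<epsilon>) and Bernoulli(1 / K): the laws of the
  indicator of correct decoding under the joint law of message and output, and under the uniform
  message independent of the output.\<close>

definition error_fdiv :: "(real \<Rightarrow> real) \<Rightarrow> nat \<Rightarrow> real \<Rightarrow> real" where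
  "error_fdiv f K \<epsilon> = 1 / real K * f (real K * (1 - \<epsilon>))
     + (real K - 1) / real K * f (real K * \<epsilon> / (real K - 1))"

lemma is_dist_uniform_mixture:
  assumes K: "K \<ge> 1" and P: "\<And>m. m \<in> {1..K} \<Longrightarrow> is_dist Y (P m)"
  shows "is_dist ({1..K} \<times> Y) (\<lambda>(m, y). 1 / real K * P m y)"
proof -
  have "(\<Sum>(m, y)\<in>{1..K} \<times> Y. 1 / real K * P m y) = (\<Sum>m\<in>{1..K}. 1 / real K * sum (P m) Y)"
    by (simp add: sum.cartesian_product[symmetric] sum_distrib_left)
  also have "\<dots> = 1" using P K by (simp add: is_dist_def)
  finally show ?thesis using P by (auto simp: is_dist_def)
qed

lemma fdiv_correct_decoding:
  fixes P :: "nat \<Rightarrow> 'b \<Rightarrow> real" and dec :: "'b \<Rightarrow> nat"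
  assumes K: "K \<ge> 2" and Y: "finite Y"
    and P: "\<And>m. m \<in> {1..K} \<Longrightarrow> is_dist Y (P m)" and q: "is_dist Y q"
    and dec: "\<And>y. y \<in> Y \<Longrightarrow> dec y \<in> {1..K}"
    and err: "\<epsilon> = 1 / real K * (\<Sum>m\<in>{1..K}. \<Sum>y\<in>Y. P m y * (if dec y \<noteq> m then 1 else 0))"
  defines "S \<equiv> {1..K} \<times> Y" and "correct \<equiv> \<lambda>(m, y). dec y = m"
  shows "fdiv f UNIV (push_forward S correct (\<lambda>(m, y). 1 / real K * P m y))
      (push_forward S correct (\<lambda>(m, y). 1 / real K * q y)) = error_fdiv f K \<epsilon>"
proof -
  define p where "p = push_forward S correct (\<lambda>(m, y). 1 / real K * P m y)"
  define r where "r = push_forward S correct (\<lambda>(m::nat, y). 1 / real K * q y)"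
  have K0: "0 < real K" "0 < real K - 1" using K by auto
  have S: "finite S" "correct ` S \<subseteq> UNIV" unfolding S_def using Y by auto
  have "{s \<in> S. correct s} = (\<lambda>y. (dec y, y)) ` Y"
    using dec by (auto simp: S_def correct_def)
  then have r_correct: "r True = 1 / real K"
    using q by (simp add: r_def push_forward_def sum.reindex inj_on_def
        sum_divide_distrib[symmetric] is_dist_def)
  have "p False = (\<Sum>m\<in>{1..K}. \<Sum>y\<in>Y. if dec y \<noteq> m then 1 / real K * P m y else 0)"
    unfolding p_def push_forward_def sum.inter_filter[OF S(1)] unfolding S_def sum.cartesian_product
    by (intro sum.cong) (auto simp: correct_def)
  also have "\<dots> = \<epsilon>"
    unfolding err sum_distrib_left by (intro sum.cong) auto
  finally have p_wrong: "p False = \<epsilon>" .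
  have "is_dist S (\<lambda>(m, y). 1 / real K * P m y)" and "is_dist S (\<lambda>(m::nat, y). 1 / real K * q y)"
    unfolding S_def using K P q by (intro is_dist_uniform_mixture; simp)+
  then have "is_dist UNIV p" and "is_dist UNIV r"
    unfolding p_def r_def using is_dist_push_forward[OF S(1) finite_class.finite_UNIV S(2)] by blast+
  then have "p False + p True = 1" and "r False + r True = 1"
    by (simp_all add: is_dist_def UNIV_bool)
  then have p_correct: "p True = 1 - \<epsilon>" and r_wrong: "r False = 1 - 1 / real K"
    using p_wrong r_correct by simp_all
  show ?thesis
    unfolding p_def[symmetric] r_def[symmetric]
    using K0 by (simp add: fdiv_def UNIV_bool error_fdiv_def p_correct p_wrong r_correct r_wrong
        field_simps)
qed

lemma error_fdiv_le_average_fdiv: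
  fixes f :: "real \<Rightarrow> real" and P :: "nat \<Rightarrow> 'b \<Rightarrow> real" and dec :: "'b \<Rightarrow> nat"
  assumes f: "convex_on {0..} f" "f 1 = 0" and K: "K \<ge> 2" and Y: "finite Y"
    and P: "\<And>m. m \<in> {1..K} \<Longrightarrow> is_dist Y (P m)"
    and q: "is_dist Y q" and Pq: "\<And>m. m \<in> {1..K} \<Longrightarrow> abs_cont Y (P m) q"
    and dec: "\<And>y. y \<in> Y \<Longrightarrow> dec y \<in> {1..K}"
    and err: "\<epsilon> = 1 / real K * (\<Sum>m\<in>{1..K}. \<Sum>y\<in>Y. P m y * (if dec y \<noteq> m then 1 else 0))"
  shows "0 \<le> error_fdiv f K \<epsilon>"
    and "error_fdiv f K \<epsilon> \<le> (\<Sum>m\<in>{1..K}. 1 / real K * fdiv f Y (P m) q)"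
proof -
  define S where "S = {1..K} \<times> Y"
  define pj where "pj = (\<lambda>(m, y). 1 / real K * P m y)"
  define qj where "qj = (\<lambda>(m::nat, y). 1 / real K * q y)"
  define correct where "correct = (\<lambda>(m, y). dec y = m)"
  have S: "finite S" "correct ` S \<subseteq> UNIV" unfolding S_def using Y by auto
  have pj: "is_dist S pj" and qj: "is_dist S qj"
    unfolding S_def pj_def qj_def using K P q by (intro is_dist_uniform_mixture; simp)+
  then have nonneg: "\<forall>s\<in>S. 0 \<le> pj s" "\<forall>s\<in>S. 0 \<le> qj s" by (auto simp: is_dist_def)
  have pqj: "abs_cont S pj qj" using Pq by (auto simp: abs_cont_def S_def pj_def qj_def)
  have binary: "fdiv f UNIV (push_forward S correct pj) (push_forward S correct qj) = error_fdiv f K \<epsilon>"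
    unfolding S_def correct_def pj_def qj_def by (rule fdiv_correct_decoding[OF K Y P q dec err])
  show "0 \<le> error_fdiv f K \<epsilon>"
    unfolding binary[symmetric]
    by (intro fdiv_nonneg f finite_class.finite_UNIV pj qj
        is_dist_push_forward[OF S(1) finite_class.finite_UNIV S(2)]
        abs_cont_push_forward[OF S(1) nonneg(2) pqj])
  have "fdiv f UNIV (push_forward S correct pj) (push_forward S correct qj) \<le> fdiv f S pj qj"
    by (rule fdiv_push_forward_le[OF f(1) S(1) finite_class.finite_UNIV S(2) nonneg pqj])
  also have "\<dots> = (\<Sum>m\<in>{1..K}. 1 / real K * fdiv f Y (P m) q)"
    unfolding S_def pj_def qj_def by (rule fdiv_joint_eq_average)
  finally show "error_fdiv f K \<epsilon> \<le> (\<Sum>m\<in>{1..K}. 1 / real K * fdiv f Y (P m) q)"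
    unfolding binary .
qed

locale igf_setting =
  fixes f G :: "real \<Rightarrow> real"
  assumes f_convex: "convex_on {0..} f" and f1: "f 1 = 0"
    and G_mono: "mono_on {0..} G" and G0: "G 0 = 0"
begin

lemma G_nonneg: "0 \<le> t \<Longrightarrow> 0 \<le> G t"
  using G_mono G0 by (metis atLeast_iff mono_onD order_refl)

lemma igf_objective_nonneg:
  assumes "finite B" "is_dist A pX" "\<And>x. x \<in> A \<Longrightarrow> is_dist B (W x)"
    and "q \<in> igf_admissible A pX B W"
  shows "0 \<le> igf_objective G f A pX B W q"
  unfolding igf_objective_def
proof (rule sum_nonneg)
  fix x assume x: "x \<in> A"
  show "0 \<le> pX x * G (fdiv f B (W x) q)"
  proof (cases "pX x = 0")
    case False
    then have "0 < pX x" using assms(2) x by (simp add: is_dist_def order_less_le)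
    then have "0 \<le> fdiv f B (W x) q"
      using assms x by (intro fdiv_nonneg[OF f_convex f1]) (auto simp: igf_admissible_def)
    then show ?thesis using \<open>0 < pX x\<close> G_nonneg by simp
  qed simp
qed

lemma igf_le_objective:
  assumes "finite B" "is_dist A pX" "\<And>x. x \<in> A \<Longrightarrow> is_dist B (W x)"
    and "q \<in> igf_admissible A pX B W"
  shows "igf G f A pX B W \<le> igf_objective G f A pX B W q"
  unfolding igf_eq_Inf
  by (rule cINF_lower[OF bdd_belowI[of _ 0] assms(4)]) (use igf_objective_nonneg[OF assms(1-3)] in auto)

lemma igf_nonneg:
  assumes "finite B" "B \<noteq> {}" "is_dist A pX" "\<And>x. x \<in> A \<Longrightarrow> is_dist B (W x)"
  shows "0 \<le> igf G f A pX B W"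
proof (rule igf_greatest)
  show "igf_admissible A pX B W \<noteq> {}" using uniform_igf_admissible[OF assms(1,2)] by blast
qed (rule igf_objective_nonneg[OF assms(1,3,4)])

lemma igf_le_capacity:
  fixes W :: "'x::finite \<Rightarrow> 'y::finite \<Rightarrow> real"
  assumes W: "\<And>x. is_dist UNIV (W x)" and p: "is_dist UNIV p"
  shows "igf G f UNIV p UNIV W \<le> (SUP p\<in>{p. is_dist UNIV p}. igf G f UNIV p UNIV W)"
proof (rule cSUP_upper)
  let ?u = "\<lambda>_::'y. 1 / real CARD('y)"
  show "bdd_above ((\<lambda>p. igf G f UNIV p UNIV W) ` {p. is_dist UNIV p})"
  proof (rule bdd_aboveI2)
    fix p' :: "'x \<Rightarrow> real" assume "p' \<in> {p. is_dist UNIV p}"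
    then have p': "is_dist UNIV p'" by simp
    have u: "?u \<in> igf_admissible UNIV p'' UNIV W" for p''
      by (rule uniform_igf_admissible) auto
    have "igf G f UNIV p' UNIV W \<le> igf_objective G f UNIV p' UNIV W ?u"
      by (rule igf_le_objective[OF _ p' W u]) simp
    also have "\<dots> \<le> (\<Sum>x\<in>UNIV. G (fdiv f UNIV (W x) ?u))"
      unfolding igf_objective_def
    proof (rule sum_mono)
      fix x
      have "p' x \<le> sum p' UNIV" by (rule member_le_sum) (use p' in \<open>auto simp: is_dist_def\<close>)
      moreover have "0 \<le> G (fdiv f UNIV (W x) ?u)"
        using u[of "\<lambda>_. 1"] W by (intro G_nonneg fdiv_nonneg[OF f_convex f1]) (auto simp: igf_admissible_def)
      ultimately show "p' x * G (fdiv f UNIV (W x) ?u) \<le> G (fdiv f UNIV (W x) ?u)"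
        using p' by (simp add: is_dist_def mult_left_le_one_le)
    qed
    finally show "igf G f UNIV p' UNIV W \<le> (\<Sum>x\<in>UNIV. G (fdiv f UNIV (W x) ?u))" .
  qed
qed (use p in simp)

lemma igf_encoded_le_capacity:
  fixes W :: "'x::finite \<Rightarrow> 'y::finite \<Rightarrow> real" and g :: "'a \<Rightarrow> 'x"
  assumes W: "\<And>x. is_dist UNIV (W x)" and A: "finite A" "is_dist A pA"
  shows "0 \<le> igf G f A pA UNIV (\<lambda>a. W (g a))"
    and "igf G f A pA UNIV (\<lambda>a. W (g a)) \<le> (SUP p\<in>{p. is_dist UNIV p}. igf G f UNIV p UNIV W)"
proof -
  have pX: "is_dist UNIV (push_forward A g pA)"
    by (rule is_dist_push_forward[OF A(1) _ _ A(2)]) auto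
  have "igf G f A pA UNIV (\<lambda>a. W (g a)) = igf G f UNIV (push_forward A g pA) UNIV W"
    by (rule igf_push_forward[OF A(1)]) (use A(2) in \<open>simp add: is_dist_def\<close>)
  moreover have "0 \<le> igf G f UNIV (push_forward A g pA) UNIV W"
    by (rule igf_nonneg[OF _ _ pX W]) simp_all
  moreover have "igf G f UNIV (push_forward A g pA) UNIV W
      \<le> (SUP p\<in>{p. is_dist UNIV p}. igf G f UNIV p UNIV W)"
    by (rule igf_le_capacity[OF W pX])
  ultimately show "0 \<le> igf G f A pA UNIV (\<lambda>a. W (g a))"
    and "igf G f A pA UNIV (\<lambda>a. W (g a)) \<le> (SUP p\<in>{p. is_dist UNIV p}. igf G f UNIV p UNIV W)"
    by simp_all
qed

lemma igf_product_channel_le_sum: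
  fixes A :: "nat set" and V :: "nat \<Rightarrow> nat \<Rightarrow> 'y::finite \<Rightarrow> real"
  assumes sa: "info_subadditive G f" and A: "finite A" "is_dist A pX"
    and V: "\<And>i x. x \<in> A \<Longrightarrow> is_dist UNIV (V i x)"
  shows "igf G f A pX ({..<k} \<rightarrow>\<^sub>E UNIV) (\<lambda>x y. \<Prod>i<k. V i x (y i))
    \<le> (\<Sum>i<k. igf G f A pX UNIV (V i))"
proof (induction k)
  case 0
  have Y0: "{..<0::nat} \<rightarrow>\<^sub>E UNIV = {\<lambda>_. undefined :: 'y}" by simp
  have "igf G f A pX ({..<0} \<rightarrow>\<^sub>E UNIV) (\<lambda>x y. \<Prod>i<0. V i x (y i))
      \<le> igf_objective G f A pX ({..<0} \<rightarrow>\<^sub>E UNIV) (\<lambda>x y. \<Prod>i<0. V i x (y i)) (\<lambda>_. 1)"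
    by (rule igf_le_objective[OF _ A(2)]) (simp_all add: Y0 igf_admissible_def is_dist_def abs_cont_def)
  also have "\<dots> = 0" by (simp add: Y0 igf_objective_def fdiv_def f1 G0)
  finally show ?case by simp
next
  case (Suc k)
  let ?Vk = "\<lambda>x y. \<Prod>i<k. V i x (y i)"
  have Vk: "is_dist ({..<k} \<rightarrow>\<^sub>E UNIV) (?Vk x)" if "x \<in> A" for x
    by (rule is_dist_product_channel) (rule V[OF that])
  have "igf G f A pX ({..<Suc k} \<rightarrow>\<^sub>E UNIV) (\<lambda>x y. \<Prod>i<Suc k. V i x (y i))
      = igf G f A pX (UNIV \<times> ({..<k} \<rightarrow>\<^sub>E UNIV)) (\<lambda>x (b, y). V k x b * ?Vk x y)"
  proof (subst igf_relabel[OF bij_betw_PiE_lessThan_Suc], rule igf_cong, clarify)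
    fix x b y assume "y \<in> {..<k} \<rightarrow>\<^sub>E (UNIV :: 'y set)"
    have "(\<Prod>i<k. V i x ((y(k := b)) i)) = ?Vk x y" by (rule prod.cong) auto
    then show "(\<Prod>i<Suc k. V i x ((y(k := b)) i)) = V k x b * ?Vk x y"
      by (simp add: prod.lessThan_Suc mult.commute)
  qed
  also have "\<dots> \<le> igf G f A pX UNIV (V k) + igf G f A pX ({..<k} \<rightarrow>\<^sub>E UNIV) ?Vk"
    by (rule info_subadditive_finite[OF sa A(1) finite_class.finite_UNIV _ A(2) V[of _ k] Vk])
      (simp add: finite_PiE)
  also have "\<dots> \<le> (\<Sum>i<Suc k. igf G f A pX UNIV (V i))"
    using Suc by simp
  finally show ?case .
qed

lemma error_fdiv_le_igf:
  fixes P :: "nat \<Rightarrow> 'b \<Rightarrow> real" and dec :: "'b \<Rightarrow> nat"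
  assumes G_convex: "convex_on {0..} G" and K: "K \<ge> 2" and Y: "finite Y"
    and P: "\<And>m. m \<in> {1..K} \<Longrightarrow> is_dist Y (P m)"
    and dec: "\<And>y. y \<in> Y \<Longrightarrow> dec y \<in> {1..K}"
    and err: "\<epsilon> = 1 / real K * (\<Sum>m\<in>{1..K}. \<Sum>y\<in>Y. P m y * (if dec y \<noteq> m then 1 else 0))"
  shows "G (error_fdiv f K \<epsilon>) \<le> igf G f {1..K} (\<lambda>_. 1 / real K) Y P"
proof (rule igf_greatest)
  have "Y \<noteq> {}" using P[of 1] K by (auto simp: is_dist_def)
  then show "igf_admissible {1..K} (\<lambda>_. 1 / real K) Y P \<noteq> {}"
    using uniform_igf_admissible[OF Y] by blast
  fix q assume "q \<in> igf_admissible {1..K} (\<lambda>_. 1 / real K) Y P"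
  then have q: "is_dist Y q" "\<And>m. m \<in> {1..K} \<Longrightarrow> abs_cont Y (P m) q"
    using K by (auto simp: igf_admissible_def)
  define D where "D m = fdiv f Y (P m) q" for m
  note error_bound = error_fdiv_le_average_fdiv[OF f_convex f1 K Y P q dec err]
  have D: "0 \<le> D m" if "m \<in> {1..K}" for m
    unfolding D_def using that by (intro fdiv_nonneg[OF f_convex f1 Y P q])
  have "0 \<le> (\<Sum>m\<in>{1..K}. 1 / real K * D m)" by (rule sum_nonneg) (use D in simp)
  then have "G (error_fdiv f K \<epsilon>) \<le> G (\<Sum>m\<in>{1..K}. 1 / real K * D m)"
    using error_bound unfolding D_def by (intro mono_onD[OF G_mono]) simp_all
  also have "\<dots> \<le> (\<Sum>m\<in>{1..K}. 1 / real K * G (D m))"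
    using convex_on_sum[OF _ _ G_convex, of "{1..K}" "\<lambda>_. 1 / real K" D] K D by simp
  finally show "G (error_fdiv f K \<epsilon>) \<le> igf_objective G f {1..K} (\<lambda>_. 1 / real K) Y P q"
    by (simp add: igf_objective_def D_def)
qed

end

theorem theorem5:
  fixes f G :: "real \<Rightarrow> real"
    and K n :: nat
    and W :: "'x::finite \<Rightarrow> 'y::finite \<Rightarrow> real"
    and enc :: "nat \<Rightarrow> nat \<Rightarrow> 'x"
    and dec :: "(nat \<Rightarrow> 'y) \<Rightarrow> nat"
    and \<epsilon> :: real
  assumes f_convex: "convex_on {0..} f" and f1: "f 1 = 0"
    and G_mono: "mono_on {0..} G" and G_convex: "convex_on {0..} G" and G0: "G 0 = 0"
    and subadd: "info_subadditive G f"
    and K: "K \<ge> 2"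
    and W: "\<forall>x. is_dist UNIV (W x)"
    and dec_range: "\<forall>y\<in>PiE {..<n} (\<lambda>_. UNIV). dec y \<in> {1..K}"
    and err: "\<epsilon> = (1 / real K) * (\<Sum>m\<in>{1..K}. \<Sum>y\<in>PiE {..<n} (\<lambda>_. UNIV).
                 (\<Prod>i<n. W (enc m i) (y i)) * (if dec y \<noteq> m then 1 else 0))"
  shows "real n \<ge>
    G (1 / real K * f (real K * (1 - \<epsilon>))
       + (real K - 1) / real K * f (real K * \<epsilon> / (real K - 1)))
    / (SUP pX\<in>{p. is_dist UNIV p}. igf G f UNIV pX UNIV W)"
proof -
  interpret igf_setting f G using f_convex f1 G_mono G0 by unfold_locales
  let ?u = "\<lambda>_::nat. 1 / real K"
  define C where "C = (SUP pX\<in>{p. is_dist UNIV p}. igf G f UNIV pX UNIV W)"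
  have u: "is_dist {1..K} ?u" using K by (simp add: is_dist_def)
  have letter: "0 \<le> igf G f {1..K} ?u UNIV (\<lambda>m. W (enc m i))"
    "igf G f {1..K} ?u UNIV (\<lambda>m. W (enc m i)) \<le> C" for i
    using igf_encoded_le_capacity[OF W[rule_format] finite_atLeastAtMost u, where g = "\<lambda>m. enc m i"]
    unfolding C_def by simp_all
  have "G (error_fdiv f K \<epsilon>)
      \<le> igf G f {1..K} ?u ({..<n} \<rightarrow>\<^sub>E UNIV) (\<lambda>m y. \<Prod>i<n. W (enc m i) (y i))"
  proof (rule error_fdiv_le_igf[OF G_convex K _ _ _ err])
    show "is_dist ({..<n} \<rightarrow>\<^sub>E UNIV) (\<lambda>y. \<Prod>i<n. W (enc m i) (y i))" for m
      by (rule is_dist_product_channel) (use W in blast)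
  qed (use dec_range in \<open>auto simp: finite_PiE\<close>)
  also have "\<dots> \<le> (\<Sum>i<n. igf G f {1..K} ?u UNIV (\<lambda>m. W (enc m i)))"
    by (rule igf_product_channel_le_sum[OF subadd finite_atLeastAtMost u]) (use W in blast)
  also have "\<dots> \<le> real n * C"
    using sum_mono[of "{..<n}" _ "\<lambda>_. C"] letter by simp
  finally have "G (error_fdiv f K \<epsilon>) \<le> real n * C" .
  moreover have "0 \<le> C" using letter[of 0] by linarith
  \<comment> \<open>if C = 0 the bound reads n \<ge> 0, since x / 0 = 0\<close>
  ultimately show ?thesis
    unfolding C_def[symmetric] error_fdiv_def[symmetric] by (cases "C = 0") (auto simp: divide_le_eq)
qed

end
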